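(* Let $C\subseteq\mathbb{R}^n$, $\bar x\in C$, and suppose there exist an open neighborhood $V$ of $\bar x$, a $\mathcal{C}^{(1)}$ map $F:V\to\mathbb{R}^m$ and a closed convex set $D\subseteq\mathbb{R}^m$ with $\mathrm{int}(D)\neq\emptyset$ such that $C\cap V=\{x\in V:F(x)\in D\}$ and the only vector $y\in N_D(F(\bar x))$ with $\nabla F(\bar x)^\top y=0$ is $y=0$. Then $C$ is smoothly approximately convex at $\bar x$. Moreover, for every $\epsilon>0$ there is a neighborhood $W$ of $\bar x$ such that any two distinct points $x,x'\in C\cap W$ are joined by an $\epsilon$-path $\gamma$ satisfying $\gamma((0,1))\subseteq\mathrm{int}(C)$.
   Context: $N_D(z)=\{y:\langle y,d-z\rangle\le0\ \forall d\in D\}$. An $\epsilon$-path from $x$ to $x'$ in $C$ is a map $\gamma:[0,1]\to C$ extending to a $\mathcal{C}^{(1)}$ map on an open neighborhood of $[0,1]$, with $\gamma(0)=x,\gamma(1)=x'$ and $\|\gamma'(t)-(x'-x)\|\le\epsilon\|x'-x\|$ for all $t\in[0,1]$. $C$ is smoothly approximately convex at $\bar x$ if for every $\epsilon>0$ there is a neighborhood $W$ of $\bar x$ such that any $x,x'\in C\cap W$ are joined by an $\epsilon$-path in $C$. *)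

theory Defs
  imports "HOL-Analysis.Analysis"
begin

definition normal_cone :: "'a::real_inner set \<Rightarrow> 'a \<Rightarrow> 'a set" where
  "normal_cone D z = {y. \<forall>d\<in>D. inner y (d - z) \<le> 0}"

text \<open>An epsilon-path from x to x' in C: gamma maps [0,1] into C, is C^1 on an open
  neighbourhood U of [0,1] (the values of gamma outside [0,1] serve as the extension),
  and its derivative stays eps-close to x' - x on [0,1].\<close>
definition eps_path :: "'a::euclidean_space set \<Rightarrow> real \<Rightarrow> 'a \<Rightarrow> 'a \<Rightarrow> (real \<Rightarrow> 'a) \<Rightarrow> bool" where
  "eps_path C eps x x' \<gamma> \<longleftrightarrow>
     \<gamma> ` {0..1} \<subseteq> C \<and> \<gamma> 0 = x \<and> \<gamma> 1 = x' \<and>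
     (\<exists>U \<gamma>'. open U \<and> {0..1} \<subseteq> U \<and>
        (\<forall>t\<in>U. (\<gamma> has_vector_derivative \<gamma>' t) (at t)) \<and> continuous_on U \<gamma>' \<and>
        (\<forall>t\<in>{0..1}. norm (\<gamma>' t - (x' - x)) \<le> eps * norm (x' - x)))"

definition smoothly_approx_convex :: "'a::euclidean_space set \<Rightarrow> 'a \<Rightarrow> bool" where
  "smoothly_approx_convex C xbar \<longleftrightarrow>
     (\<forall>eps>0. \<exists>W. open W \<and> xbar \<in> W \<and>
        (\<forall>x\<in>C \<inter> W. \<forall>x'\<in>C \<inter> W. \<exists>\<gamma>. eps_path C eps x x' \<gamma>))"

end

theory Submission
  imports Defs
begin

(* Separating the interior of D from the affine subspace F xbar + range (F' xbar) shows that the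
  qualification condition yields a direction u with F xbar + F' xbar u in the interior of D.
  Nearby points x, x' of C are then joined by the chord bent in direction u,
  gamma t = x + t (x' - x) + s(t) u with s(t) = c |x' - x| t (1 - t).  To first order,
  F (gamma t) is the point (1 - t) F x + t F x' of D pushed by s(t) F' xbar u, i.e. a fraction
  s(t) of the way towards a ball around F xbar + F' xbar u inside D; the linearization error is
  o(|x' - x|) t (1 - t) and is absorbed by that ball.  So gamma maps (0, 1) into the open set
  V \<inter> F -` interior D \<subseteq> interior C, and gamma' differs from x' - x by at most c |u| |x' - x|. *)

lemma normal_cone_qualification_imp_interior_direction:
  fixes A :: "'a::euclidean_space \<Rightarrow> 'b::euclidean_space" and D :: "'b set"
  assumes "linear A" "closed D" "convex D" "interior D \<noteq> {}" "z \<in> D"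
    and qualification: "\<And>y. y \<in> normal_cone D z \<Longrightarrow> adjoint A y = 0 \<Longrightarrow> y = 0"
  shows "\<exists>u. z + A u \<in> interior D"
proof (rule ccontr)
  let ?L = "range (\<lambda>u. z + A u)"
  assume "\<not> ?thesis"
  then have disjoint: "interior D \<inter> ?L = {}" by auto
  have "?L = (+) z ` range A" by auto
  then have "convex ?L"
    using convex_translation convex_linear_image[OF assms(1) convex_UNIV] by metis
  then obtain a b where "a \<noteq> 0" and below: "\<forall>x\<in>interior D. inner a x \<le> b"
    and above: "\<forall>x\<in>?L. b \<le> inner a x"
    using separating_hyperplane_sets[OF convex_interior[OF assms(3)] _ assms(4) _ disjoint] by blast
  have parallel: "inner a (A u) = 0" for u
  proof (rule ccontr)
    assume "inner a (A u) \<noteq> 0"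
    define k where "k = (inner a z - b + 1) / inner a (A u)"
    have "b \<le> inner a (z + A (- k *\<^sub>R u))" using above by auto
    also have "\<dots> = inner a z - k * inner a (A u)"
      using assms(1) by (simp add: linear_scale linear_neg inner_add_right inner_diff_right)
    also have "\<dots> = b - 1" using \<open>inner a (A u) \<noteq> 0\<close> by (simp add: k_def)
    finally show False by simp
  qed
  have "b \<le> inner a z"
    using above linear_0[OF assms(1)] by (metis add.right_neutral rangeI)
  then have "interior D \<subseteq> {x. inner a x \<le> inner a z}" using below by force
  then have "closure (interior D) \<subseteq> {x. inner a x \<le> inner a z}"
    by (intro closure_minimal) (auto intro: closed_halfspace_le)
  then have "D \<subseteq> {x. inner a x \<le> inner a z}"
    using convex_closure_interior[OF assms(3,4)] assms(2) by (simp add: closure_closed)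
  then have "a \<in> normal_cone D z"
    by (auto simp: normal_cone_def inner_diff_right)
  moreover have "adjoint A a = 0"
  proof -
    have "adjoint A a \<bullet> adjoint A a = A (adjoint A a) \<bullet> a" by (rule adjoint_works[OF assms(1)])
    also have "\<dots> = 0" using parallel by (simp add: inner_commute)
    finally show ?thesis by simp
  qed
  ultimately show False using qualification \<open>a \<noteq> 0\<close> by blast
qed

lemma mem_interior_convex_perturbed_shrink:
  fixes D :: "'a::euclidean_space set"
  assumes "convex D" "ball (b + v) r \<subseteq> interior D" "p \<in> D" "norm (p - b) < r / 2"
    and "0 < s" "s \<le> 1" "norm (z - p - s *\<^sub>R v) \<le> s * r / 2"
  shows "z \<in> interior D"
proof -
  define q where "q = p + v + (1 / s) *\<^sub>R (z - p - s *\<^sub>R v)"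
  have "q - (b + v) = (p - b) + (1 / s) *\<^sub>R (z - p - s *\<^sub>R v)"
    by (simp add: q_def)
  then have "norm (q - (b + v)) \<le> norm (p - b) + norm ((1 / s) *\<^sub>R (z - p - s *\<^sub>R v))"
    by (metis norm_triangle_ineq)
  also have "\<dots> < r"
  proof -
    have "norm ((1 / s) *\<^sub>R (z - p - s *\<^sub>R v)) \<le> r / 2"
      using assms(5,7) by (simp add: pos_divide_le_eq mult.commute)
    then show ?thesis using assms(4) by linarith
  qed
  finally have "q \<in> interior D"
    using assms(2) by (auto simp: dist_norm norm_minus_commute)
  moreover have "z = p - s *\<^sub>R (p - q)"
    using assms(5) by (simp add: q_def algebra_simps)
  ultimately show ?thesis
    using mem_interior_convex_shrink[OF assms(1) _ assms(3,5,6)] by simp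
qed

lemma C1_ball_linearization_bound:
  fixes F :: "'a::euclidean_space \<Rightarrow> 'b::euclidean_space" and F' :: "'a \<Rightarrow> ('a \<Rightarrow>\<^sub>L 'b)"
  assumes "open V" "xbar \<in> V"
    and deriv: "\<And>x. x \<in> V \<Longrightarrow> (F has_derivative F' x) (at x)"
    and "continuous_on V F'" "0 < \<omega>" "0 < \<rho>"
  shows "\<exists>d>0. ball xbar d \<subseteq> V \<and>
    (\<forall>y\<in>ball xbar d. \<forall>z\<in>ball xbar d. norm (F y - F z - F' xbar (y - z)) \<le> \<omega> * norm (y - z)) \<and>
    (\<forall>y\<in>ball xbar d. norm (F y - F xbar) < \<rho>)"
proof -
  have "isCont F' xbar" using assms(1,2,4) continuous_on_eq_continuous_at by blast
  then obtain d1 where d1: "0 < d1" "\<And>y. dist y xbar < d1 \<Longrightarrow> norm (F' y - F' xbar) \<le> \<omega>"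
    using \<open>0 < \<omega>\<close> unfolding continuous_at_eps_delta dist_norm by (metis less_imp_le)
  have "isCont F xbar" using deriv[OF assms(2)] has_derivative_continuous by blast
  then obtain d2 where d2: "0 < d2" "\<And>y. dist y xbar < d2 \<Longrightarrow> norm (F y - F xbar) < \<rho>"
    using \<open>0 < \<rho>\<close> unfolding continuous_at_eps_delta dist_norm by metis
  obtain d3 where d3: "0 < d3" "ball xbar d3 \<subseteq> V" using assms(1,2) openE by blast
  define d where "d = min d1 (min d2 d3)"
  define S where "S = ball xbar d"
  have "S \<subseteq> V" using d3 by (auto simp: S_def d_def)
  have "norm (F y - F z - F' xbar (y - z)) \<le> \<omega> * norm (y - z)" if "y \<in> S" "z \<in> S" for y z
  proof -
    have "norm (F y - F z - F' xbar (y - z)) \<le> norm (y - z) * \<omega>"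
    proof (rule differentiable_bound_linearization[where S = S and f' = "\<lambda>x. blinfun_apply (F' x)"])
      show "z + t *\<^sub>R (y - z) \<in> S" if "t \<in> {0..1}" for t
        using that convexD[OF convex_ball[of xbar d], of z y "1 - t" t] \<open>y \<in> S\<close> \<open>z \<in> S\<close>
        by (simp add: S_def algebra_simps)
      show "(F has_derivative F' x) (at x within S)" if "x \<in> S" for x
        using that \<open>S \<subseteq> V\<close> deriv has_derivative_at_withinI by blast
      show "onorm (blinfun_apply (F' x) - blinfun_apply (F' xbar)) \<le> \<omega>" if "x \<in> S" for x
      proof -
        have "blinfun_apply (F' x) - blinfun_apply (F' xbar) = blinfun_apply (F' x - F' xbar)"
          by (simp add: fun_eq_iff blinfun.diff_left)
        then show ?thesis
          using that d1(2)[of x] by (simp add: S_def d_def dist_commute norm_blinfun.rep_eq)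
      qed
      show "xbar \<in> S" using d1 d2 d3 by (simp add: S_def d_def)
    qed
    then show ?thesis by (simp add: mult.commute)
  qed
  moreover have "norm (F y - F xbar) < \<rho>" if "y \<in> S" for y
    using that d2 by (auto simp: S_def d_def dist_commute)
  moreover have "0 < d" using d1 d2 d3 by (simp add: d_def)
  ultimately show ?thesis using \<open>S \<subseteq> V\<close> unfolding S_def by blast
qed

definition bent_segment :: "real \<Rightarrow> 'a \<Rightarrow> 'a \<Rightarrow> 'a \<Rightarrow> real \<Rightarrow> 'a::real_normed_vector" where
  "bent_segment c u x x' t = x + t *\<^sub>R (x' - x) + (c * norm (x' - x) * t * (1 - t)) *\<^sub>R u"

lemma bent_segment_0 [simp]: "bent_segment c u x x' 0 = x"
  and bent_segment_1 [simp]: "bent_segment c u x x' 1 = x'"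
  and bent_segment_same [simp]: "bent_segment c u x x t = x"
  by (simp_all add: bent_segment_def)

lemma bent_segment_has_vector_derivative:
  "(bent_segment c u x x' has_vector_derivative (x' - x) + (c * norm (x' - x) * (1 - 2 * t)) *\<^sub>R u) (at t)"
  unfolding bent_segment_def [abs_def]
  by (auto intro!: derivative_eq_intros simp: algebra_simps)

lemma eps_path_bent_segment:
  assumes "x \<in> C" "x' \<in> C" "bent_segment c u x x' ` {0<..<1} \<subseteq> C"
    and "0 \<le> c" "c * norm u \<le> eps"
  shows "eps_path C eps x x' (bent_segment c u x x')"
  unfolding eps_path_def
proof (intro conjI exI[of _ UNIV] exI[of _ "\<lambda>t. (x' - x) + (c * norm (x' - x) * (1 - 2 * t)) *\<^sub>R u"])
  have "{0..1::real} = {0<..<1} \<union> {0, 1}" by auto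
  then show "bent_segment c u x x' ` {0..1} \<subseteq> C" using assms(1-3) by auto
  show "\<forall>t\<in>{0..1}. norm ((x' - x) + (c * norm (x' - x) * (1 - 2 * t)) *\<^sub>R u - (x' - x))
      \<le> eps * norm (x' - x)"
  proof
    fix t :: real assume "t \<in> {0..1}"
    then have "\<bar>1 - 2 * t\<bar> \<le> 1" by auto
    then have "c * norm (x' - x) * \<bar>1 - 2 * t\<bar> * norm u \<le> c * norm (x' - x) * 1 * norm u"
      using assms(4) by (intro mult_right_mono mult_left_mono) auto
    also have "\<dots> = (c * norm u) * norm (x' - x)" by simp
    also have "\<dots> \<le> eps * norm (x' - x)"
      using assms(5) by (simp add: mult_right_mono)
    finally show "norm ((x' - x) + (c * norm (x' - x) * (1 - 2 * t)) *\<^sub>R u - (x' - x))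
      \<le> eps * norm (x' - x)" using assms(4) by (simp add: abs_mult)
  qed
  show "continuous_on UNIV (\<lambda>t. (x' - x) + (c * norm (x' - x) * (1 - 2 * t)) *\<^sub>R u)"
    by (intro continuous_intros)
qed (simp_all add: bent_segment_has_vector_derivative)

lemma bent_segment_dist_le:
  assumes "t \<in> {0..1}" "0 \<le> c" "c * norm u \<le> 1"
  shows "norm (bent_segment c u x x' t - x) \<le> 2 * t * norm (x' - x)"
    and "norm (bent_segment c u x x' t - x') \<le> 2 * (1 - t) * norm (x' - x)"
proof -
  let ?h = "norm (x' - x)"
  have "norm ((c * ?h * t * (1 - t)) *\<^sub>R u) = (c * norm u) * (?h * t * (1 - t))"
    using assms by (simp add: abs_mult)
  also have "\<dots> \<le> ?h * t * (1 - t)"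
    using assms by (intro mult_left_le_one_le) auto
  finally have bend: "norm ((c * ?h * t * (1 - t)) *\<^sub>R u) \<le> ?h * t * (1 - t)" .
  have "norm (bent_segment c u x x' t - x) \<le> t * ?h + ?h * t * (1 - t)"
    using norm_triangle_le[OF add_mono[OF order_refl bend], of "t *\<^sub>R (x' - x)"] assms(1)
    by (simp add: bent_segment_def)
  also have "\<dots> \<le> 2 * t * ?h"
    using assms(1) mult_left_mono[of "1 - t" 1 "?h * t"] by (simp add: algebra_simps)
  finally show "norm (bent_segment c u x x' t - x) \<le> 2 * t * ?h" .
  have "bent_segment c u x x' t - x' = (1 - t) *\<^sub>R (x - x') + (c * ?h * t * (1 - t)) *\<^sub>R u"
    by (simp add: bent_segment_def algebra_simps)
  then have "norm (bent_segment c u x x' t - x') \<le> (1 - t) * ?h + ?h * t * (1 - t)"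
    using norm_triangle_le[OF add_mono[OF order_refl bend], of "(1 - t) *\<^sub>R (x - x')"] assms(1)
    by (simp add: norm_minus_commute)
  also have "\<dots> \<le> 2 * (1 - t) * ?h"
  proof -
    have "?h * (1 - t) * t \<le> ?h * (1 - t)" using assms(1) by (intro mult_left_le) auto
    then show ?thesis by (simp add: algebra_simps)
  qed
  finally show "norm (bent_segment c u x x' t - x') \<le> 2 * (1 - t) * ?h" .
qed

(* With slope c r / 8 the linearization error at the bent point, at most
  4 (c r / 8) t (1 - t) |x' - x|, is exactly s r / 2 for the bend s = c |x' - x| t (1 - t). *)
lemma bent_segment_into_interior:
  fixes F :: "'a::euclidean_space \<Rightarrow> 'b::euclidean_space"
  assumes "linear A" "convex D" "ball (b + A u) r \<subseteq> interior D"
    and linearization: "\<And>y z. y \<in> S \<Longrightarrow> z \<in> S \<Longrightarrow>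
      norm (F y - F z - A (y - z)) \<le> c * r / 8 * norm (y - z)"
    and near: "\<And>y. y \<in> S \<Longrightarrow> norm (F y - b) < r / 2"
    and "x \<in> S" "x' \<in> S" "F x \<in> D" "F x' \<in> D" "x \<noteq> x'"
    and "0 < c" "c * norm (x' - x) \<le> 1" "c * norm u \<le> 1"
    and "t \<in> {0<..<1}" "bent_segment c u x x' t \<in> S"
  shows "F (bent_segment c u x x' t) \<in> interior D"
proof -
  define h where "h = norm (x' - x)"
  define y where "y = bent_segment c u x x' t"
  define s where "s = c * h * t * (1 - t)"
  define p where "p = (1 - t) *\<^sub>R F x + t *\<^sub>R F x'"
  have t: "0 < t" "t < 1" using assms(14) by auto
  have "0 < r" using near[OF assms(6)] norm_ge_zero[of "F x - b"] by linarith
  have "0 < h" using assms(10) by (simp add: h_def)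
  then have s: "0 < s" "s \<le> 1"
    using t assms(11,12) mult_mono[of "c * h" 1 "t * (1 - t)" 1]
    by (simp_all add: s_def h_def mult.assoc mult_le_one)
  have "p \<in> D"
    using t assms(8,9) by (auto simp: p_def intro: convexD[OF assms(2)])
  have "p - b = (1 - t) *\<^sub>R (F x - b) + t *\<^sub>R (F x' - b)"
    by (simp add: p_def algebra_simps)
  then have "norm (p - b) \<le> (1 - t) * norm (F x - b) + t * norm (F x' - b)"
    using t norm_triangle_ineq[of "(1 - t) *\<^sub>R (F x - b)" "t *\<^sub>R (F x' - b)"] by simp
  also have "\<dots> < (1 - t) * (r / 2) + t * (r / 2)"
    using t near[OF assms(6)] near[OF assms(7)]
    by (intro add_strict_mono mult_strict_left_mono) auto
  finally have "norm (p - b) < r / 2" by (simp add: field_simps)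
  have "y = ((1 - t) *\<^sub>R x + t *\<^sub>R x') + s *\<^sub>R u"
    by (simp add: y_def bent_segment_def s_def h_def algebra_simps)
  then have "A y = (1 - t) *\<^sub>R A x + t *\<^sub>R A x' + s *\<^sub>R A u"
    by (simp add: linear_add[OF assms(1)] linear_scale[OF assms(1)])
  then have "F y - p - s *\<^sub>R A u
      = (1 - t) *\<^sub>R (F y - F x - A (y - x)) + t *\<^sub>R (F y - F x' - A (y - x'))"
    by (simp add: p_def linear_diff[OF assms(1)] algebra_simps)
  then have "norm (F y - p - s *\<^sub>R A u)
      \<le> (1 - t) * norm (F y - F x - A (y - x)) + t * norm (F y - F x' - A (y - x'))"
    using t norm_triangle_ineq[of "(1 - t) *\<^sub>R (F y - F x - A (y - x))"
        "t *\<^sub>R (F y - F x' - A (y - x'))"] by simp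
  also have "\<dots> \<le> (1 - t) * (c * r / 8 * norm (y - x)) + t * (c * r / 8 * norm (y - x'))"
    using t linearization[of y x] linearization[of y x'] assms(6,7,15)
    by (intro add_mono mult_left_mono) (auto simp: y_def)
  also have "\<dots> \<le> (1 - t) * (c * r / 8 * (2 * t * h)) + t * (c * r / 8 * (2 * (1 - t) * h))"
    using t bent_segment_dist_le[of t c u x x'] assms(11,13) \<open>0 < r\<close>
    by (intro add_mono mult_left_mono) (auto simp: y_def h_def)
  also have "\<dots> = s * r / 2"
    by (simp add: s_def field_simps)
  finally show ?thesis
    using mem_interior_convex_perturbed_shrink[OF assms(2,3) \<open>p \<in> D\<close> \<open>norm (p - b) < r / 2\<close> s]
    by (simp add: y_def linear_scale[OF assms(1)])
qed

lemma bent_segments_near_into_preimage_interior: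
  fixes F :: "'a::euclidean_space \<Rightarrow> 'b::euclidean_space" and F' :: "'a \<Rightarrow> ('a \<Rightarrow>\<^sub>L 'b)"
  assumes "open V" "xbar \<in> V"
    and "\<And>x. x \<in> V \<Longrightarrow> (F has_derivative F' x) (at x)"
    and "continuous_on V F'" "convex D"
    and "F xbar + F' xbar u \<in> interior D" "0 < c" "c \<le> 1" "c * norm u \<le> 1"
  shows "\<exists>\<delta>>0. \<forall>x\<in>ball xbar \<delta>. \<forall>x'\<in>ball xbar \<delta>. F x \<in> D \<longrightarrow> F x' \<in> D \<longrightarrow> x \<noteq> x' \<longrightarrow>
           bent_segment c u x x' ` {0<..<1} \<subseteq> V \<inter> F -` interior D"
proof -
  obtain r where r: "0 < r" "ball (F xbar + F' xbar u) r \<subseteq> interior D"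
    using assms(6) open_interior openE by metis
  then obtain d where "0 < d" "ball xbar d \<subseteq> V"
    and linearization: "\<forall>y\<in>ball xbar d. \<forall>z\<in>ball xbar d.
        norm (F y - F z - F' xbar (y - z)) \<le> c * r / 8 * norm (y - z)"
    and near: "\<forall>y\<in>ball xbar d. norm (F y - F xbar) < r / 2"
    using C1_ball_linearization_bound[OF assms(1-4), of "c * r / 8" "r / 2"] \<open>0 < c\<close> by auto
  define \<delta> where "\<delta> = min (d / 5) (1 / 2)"
  have "0 < \<delta>" "ball xbar \<delta> \<subseteq> ball xbar d"
    using \<open>0 < d\<close> by (auto simp: \<delta>_def intro!: subset_ball)
  show ?thesis
  proof (intro exI[of _ \<delta>] conjI ballI impI subsetI)
    fix x x' y
    assume x: "x \<in> ball xbar \<delta>" and x': "x' \<in> ball xbar \<delta>" and "F x \<in> D" "F x' \<in> D" "x \<noteq> x'"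
      and "y \<in> bent_segment c u x x' ` {0<..<1}"
    then obtain t where t: "t \<in> {0<..<1}" "y = bent_segment c u x x' t" by blast
    have "norm (x' - x) < 2 * \<delta>"
      using x x' dist_triangle[of x' x xbar] by (simp add: dist_norm norm_minus_commute)
    have "dist xbar y \<le> dist xbar x + norm (y - x)"
      by (metis dist_norm dist_triangle norm_minus_commute)
    also have "\<dots> < \<delta> + 2 * t * norm (x' - x)"
      using x t bent_segment_dist_le[of t c u x x'] assms(7,9) by simp
    also have "\<dots> \<le> 5 * \<delta>"
      using t \<open>norm (x' - x) < 2 * \<delta>\<close> mult_right_le_one_le[of "norm (x' - x)" t]
      by (simp add: mult.commute)
    finally have "y \<in> ball xbar d" by (simp add: \<delta>_def)
    moreover have "x \<in> ball xbar d" "x' \<in> ball xbar d"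
      using x x' \<open>ball xbar \<delta> \<subseteq> ball xbar d\<close> by auto
    moreover have "c * norm (x' - x) \<le> 1"
      using assms(7,8) \<open>norm (x' - x) < 2 * \<delta>\<close> mult_mono[of c 1 "norm (x' - x)" 1]
      by (simp add: \<delta>_def)
    ultimately have "F y \<in> interior D"
      using bent_segment_into_interior[OF bounded_linear.linear[OF blinfun.bounded_linear_right] assms(5) r(2), of "ball xbar d" F c]
        linearization near assms(7,9) \<open>F x \<in> D\<close> \<open>F x' \<in> D\<close> \<open>x \<noteq> x'\<close> t
      by blast
    then show "y \<in> V \<inter> F -` interior D"
      using \<open>y \<in> ball xbar d\<close> \<open>ball xbar d \<subseteq> V\<close> by blast
  qed (use \<open>0 < \<delta>\<close> in simp)
qed

lemma eps_paths_through_interior_near: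
  fixes F :: "'a::euclidean_space \<Rightarrow> 'b::euclidean_space" and F' :: "'a \<Rightarrow> ('a \<Rightarrow>\<^sub>L 'b)"
  assumes "open V" "xbar \<in> V"
    and deriv: "\<And>x. x \<in> V \<Longrightarrow> (F has_derivative F' x) (at x)"
    and "continuous_on V F'" "convex D" "C \<inter> V = {x \<in> V. F x \<in> D}"
    and "F xbar + F' xbar u \<in> interior D" "0 < eps"
  shows "\<exists>W. open W \<and> xbar \<in> W \<and> (\<forall>x\<in>C \<inter> W. \<forall>x'\<in>C \<inter> W. \<exists>\<gamma>.
      eps_path C eps x x' \<gamma> \<and> (x \<noteq> x' \<longrightarrow> \<gamma> ` {0<..<1} \<subseteq> interior C))"
proof -
  have "continuous_on V F"
    by (rule has_derivative_continuous_on) (use deriv has_derivative_at_withinI in blast)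
  then have "open (V \<inter> F -` interior D)"
    by (rule continuous_open_preimage[OF _ assms(1) open_interior])
  moreover have "V \<inter> F -` interior D \<subseteq> C"
    using assms(6) interior_subset by blast
  ultimately have preimage: "V \<inter> F -` interior D \<subseteq> interior C"
    by (simp add: interior_maximal)
  define c where "c = min eps 1 / (norm u + 1)"
  have "0 < norm u + 1" by (simp add: add_nonneg_pos)
  then have "0 < c" using assms(8) by (simp add: c_def)
  have "c * norm u + c = c * (norm u + 1)" by (simp add: algebra_simps)
  also have "\<dots> = min eps 1" using \<open>0 < norm u + 1\<close> by (simp add: c_def)
  finally have c: "c \<le> 1" "c * norm u \<le> eps" "c * norm u \<le> 1"
    using \<open>0 < c\<close> min.cobounded1[of eps 1] min.cobounded2[of eps 1]
      mult_nonneg_nonneg[OF less_imp_le[OF \<open>0 < c\<close>] norm_ge_zero[of u]]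
    by (-, linarith+)
  obtain \<delta> where "0 < \<delta>" and \<delta>: "\<forall>x\<in>ball xbar \<delta>. \<forall>x'\<in>ball xbar \<delta>. F x \<in> D \<longrightarrow> F x' \<in> D \<longrightarrow>
      x \<noteq> x' \<longrightarrow> bent_segment c u x x' ` {0<..<1} \<subseteq> V \<inter> F -` interior D"
    using bent_segments_near_into_preimage_interior[OF assms(1-5,7) \<open>0 < c\<close> c(1,3)] by blast
  show ?thesis
  proof (intro exI[of _ "V \<inter> ball xbar \<delta>"] conjI ballI)
    show "open (V \<inter> ball xbar \<delta>)" using assms(1) by blast
    show "xbar \<in> V \<inter> ball xbar \<delta>" using assms(2) \<open>0 < \<delta>\<close> by simp
    fix x x' assume x: "x \<in> C \<inter> (V \<inter> ball xbar \<delta>)" and x': "x' \<in> C \<inter> (V \<inter> ball xbar \<delta>)"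
    have "F x \<in> D" "F x' \<in> D" using x x' assms(6) by blast+
    then have inner: "bent_segment c u x x' ` {0<..<1} \<subseteq> interior C" if "x \<noteq> x'"
      using \<delta> x x' that preimage by (meson IntD2 order_trans)
    have "bent_segment c u x x' ` {0<..<1} \<subseteq> C"
      using inner interior_subset x by (cases "x = x'") auto
    then have "eps_path C eps x x' (bent_segment c u x x')"
      using x x' \<open>0 < c\<close> c(2) by (intro eps_path_bent_segment) auto
    with inner show "\<exists>\<gamma>. eps_path C eps x x' \<gamma> \<and> (x \<noteq> x' \<longrightarrow> \<gamma> ` {0<..<1} \<subseteq> interior C)"
      by blast
  qed
qed

theorem proposition3p12:
  fixes C :: "'a::euclidean_space set" and xbar :: 'a
    and V :: "'a set" and F :: "'a \<Rightarrow> 'b::euclidean_space" and F' :: "'a \<Rightarrow> ('a \<Rightarrow>\<^sub>L 'b)"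
    and D :: "'b set"
  assumes "xbar \<in> C"
    and "open V" and "xbar \<in> V"
    and "\<And>x. x \<in> V \<Longrightarrow> (F has_derivative blinfun_apply (F' x)) (at x)"
    and "continuous_on V F'"
    and "closed D" and "convex D" and "interior D \<noteq> {}"
    and "C \<inter> V = {x \<in> V. F x \<in> D}"
    and "\<And>y. y \<in> normal_cone D (F xbar) \<Longrightarrow> adjoint (blinfun_apply (F' xbar)) y = 0 \<Longrightarrow> y = 0"
  shows "smoothly_approx_convex C xbar \<and>
    (\<forall>eps>0. \<exists>W. open W \<and> xbar \<in> W \<and>
       (\<forall>x\<in>C \<inter> W. \<forall>x'\<in>C \<inter> W. x \<noteq> x' \<longrightarrow>
          (\<exists>\<gamma>. eps_path C eps x x' \<gamma> \<and> \<gamma> ` {0<..<1} \<subseteq> interior C)))"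
proof -
  have lin: "linear (blinfun_apply (F' xbar))"
    by (rule bounded_linear.linear[OF blinfun.bounded_linear_right])
  have "xbar \<in> C \<inter> V" using assms(1,3) by simp
  then have "F xbar \<in> D" unfolding assms(9) by simp
  then obtain u where u: "F xbar + F' xbar u \<in> interior D"
    using normal_cone_qualification_imp_interior_direction[OF lin assms(6-8) \<open>F xbar \<in> D\<close> assms(10)]
    by blast
  show ?thesis
    unfolding smoothly_approx_convex_def
  proof (intro conjI allI impI)
    fix eps :: real
    assume "0 < eps"
    obtain W where W: "open W" "xbar \<in> W" "\<forall>x\<in>C \<inter> W. \<forall>x'\<in>C \<inter> W. \<exists>\<gamma>.
        eps_path C eps x x' \<gamma> \<and> (x \<noteq> x' \<longrightarrow> \<gamma> ` {0<..<1} \<subseteq> interior C)"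
      using eps_paths_through_interior_near[OF assms(2-5,7,9) u \<open>0 < eps\<close>] by blast
    show "\<exists>W. open W \<and> xbar \<in> W \<and> (\<forall>x\<in>C \<inter> W. \<forall>x'\<in>C \<inter> W. \<exists>\<gamma>. eps_path C eps x x' \<gamma>)"
      using W(3) by (intro exI[of _ W] conjI W(1,2)) blast
    show "\<exists>W. open W \<and> xbar \<in> W \<and> (\<forall>x\<in>C \<inter> W. \<forall>x'\<in>C \<inter> W. x \<noteq> x' \<longrightarrow>
        (\<exists>\<gamma>. eps_path C eps x x' \<gamma> \<and> \<gamma> ` {0<..<1} \<subseteq> interior C))"
      using W(3) by (intro exI[of _ W] conjI W(1,2)) blast
  qed
qed

end
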